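(* Let $Z$ be a separable real Hilbert space and let $f:Z\to\mathbb{R}$ be a continuous convex function. Then there exist a unique closed linear subspace $X_f$ of $Z$, a unique vector $v_f\in X_f^{\perp}$, and a unique essentially directionally coercive convex function $c_f:X_f\to\mathbb{R}$ such that $$f(z)=c_f(P_{X_f}(z))+\langle v_f,z\rangle\quad\text{for all } z\in Z.$$ Moreover, $X_f=\overline{\mathrm{span}}\{u-w: u\in\partial f(z),\ w\in\partial f(y),\ z,y\in Z\}$, and $v_f=Q_{X_f}(\xi_0)$ for any $z_0\in Z$ and any $\xi_0\in\partial f(z_0)$, where $Q_{X_f}=I-P_{X_f}$ is the orthogonal projection of $Z$ onto $X_f^{\perp}$.
   Context: For a closed linear subspace $X$ of a Hilbert space $Z$, $P_X:Z\to X$ denotes the orthogonal projection and $X^\perp$ the orthogonal complement; $\overline{\mathrm{span}}(V)$ is the closure of the linear span of $V$. For a convex $f:Z\to\mathbb{R}$, $\partial f(x)=\{\xi\in Z: f(y)\ge f(x)+\langle \xi,y-x\rangle \text{ for all } y\in Z\}$. A function $g$ on a Banach space $X$ is directionally coercive if $\lim_{t\to\infty} g(x+tv)=\infty$ for every $x\in X$ and every $v\in X\setminus\{0\}$; it is essentially directionally coercive if there exists a continuous linear functional $\ell\in X^*$ such that $g-\ell$ is directionally coercive. *)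

theory Defs
  imports "HOL-Analysis.Analysis"
begin

definition orth_compl :: "'a::real_inner set \<Rightarrow> 'a set" where
  "orth_compl X = {z. \<forall>x\<in>X. inner z x = 0}"

definition orth_proj :: "'a::real_inner set \<Rightarrow> 'a \<Rightarrow> 'a" where
  "orth_proj X z = (THE p. p \<in> X \<and> z - p \<in> orth_compl X)"

definition subdiff :: "('a::real_inner \<Rightarrow> real) \<Rightarrow> 'a \<Rightarrow> 'a set" where
  "subdiff f x = {\<xi>. \<forall>y. f y \<ge> f x + inner \<xi> (y - x)}"

definition linear_on_subspace :: "'a::real_vector set \<Rightarrow> ('a \<Rightarrow> real) \<Rightarrow> bool" where
  "linear_on_subspace X l \<longleftrightarrow>
     (\<forall>x\<in>X. \<forall>y\<in>X. l (x + y) = l x + l y) \<and> (\<forall>x\<in>X. \<forall>c. l (c *\<^sub>R x) = c * l x)"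

definition dir_coercive_on :: "'a::real_normed_vector set \<Rightarrow> ('a \<Rightarrow> real) \<Rightarrow> bool" where
  "dir_coercive_on X g \<longleftrightarrow>
     (\<forall>x\<in>X. \<forall>v\<in>X. v \<noteq> 0 \<longrightarrow> filterlim (\<lambda>t. g (x + t *\<^sub>R v)) at_top at_top)"

definition ess_dir_coercive_on :: "'a::real_normed_vector set \<Rightarrow> ('a \<Rightarrow> real) \<Rightarrow> bool" where
  "ess_dir_coercive_on X g \<longleftrightarrow>
     (\<exists>l. linear_on_subspace X l \<and> continuous_on X l \<and> dir_coercive_on X (\<lambda>x. g x - l x))"

definition is_decomp :: "('a::real_inner \<Rightarrow> real) \<Rightarrow> 'a set \<Rightarrow> 'a \<Rightarrow> ('a \<Rightarrow> real) \<Rightarrow> bool" where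
  "is_decomp f X v c \<longleftrightarrow>
     subspace X \<and> closed X \<and> v \<in> orth_compl X \<and> convex_on X c \<and> ess_dir_coercive_on X c \<and>
     (\<forall>z. f z = c (orth_proj X z) + inner v z)"

end

theory Submission
  imports Defs
begin

(*
  Every subgradient of f has the same component along a direction d orthogonal to all differences
  of subgradients, so f is affine along such d; projecting onto the closed span X of these
  differences gives f z = f (P z) + <v, z> with c = f on X.  For coercivity, separability provides
  a strictly positive average c0 of a dense sequence of subgradients: for every nonzero d in X some
  subgradient exceeds c0 in direction d, and convexity turns this into linear growth of
  f - <c0, _> along every line parallel to d.  Conversely, a decomposition (X', v', c') makes f
  affine along the complement of X', so differences of subgradients lie in X' and X is contained
  in X'; a direction of X' orthogonal to X would make c' affine along a line, contradicting
  essential coercivity.  Subgradients exist because the closed convex epigraph can be separated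
  from points below it in the Hilbert space Z x R, and a nested sequence of bounded sets of
  approximate subgradients has a common point.
*)

section \<open>Hilbert-space geometry\<close>

lemma dist_sq_le_convex_midpoint:
  fixes C :: "'a::real_inner set"
  assumes "convex C" "a \<in> C" "b \<in> C" "0 \<le> \<delta>" "\<forall>y\<in>C. \<delta> \<le> dist z y"
  shows "(dist a b)\<^sup>2 \<le> 2 * (dist z a)\<^sup>2 + 2 * (dist z b)\<^sup>2 - 4 * \<delta>\<^sup>2"
proof -
  have "midpoint a b \<in> C"
    unfolding midpoint_def using convexD[OF assms(1-3), of "1/2" "1/2"]
    by (simp add: scaleR_add_right)
  then have "\<delta>\<^sup>2 \<le> (dist z (midpoint a b))\<^sup>2"
    using assms(4,5) by (simp add: power_mono)
  moreover have "(dist a b)\<^sup>2 + 4 * (dist z (midpoint a b))\<^sup>2 = 2 * (dist z a)\<^sup>2 + 2 * (dist z b)\<^sup>2"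
  proof -
    have parallelogram: "(norm (w - u))\<^sup>2 + 4 * (norm ((1/2) *\<^sub>R (u + w)))\<^sup>2 = 2 * (norm u)\<^sup>2 + 2 * (norm w)\<^sup>2"
      for u w :: 'a
      unfolding power2_norm_eq_inner by (simp add: inner_add inner_diff inner_commute algebra_simps)
    have "z - midpoint a b = (1/2) *\<^sub>R ((z - a) + (z - b))"
      by (simp add: midpoint_def algebra_simps flip: scaleR_add_left)
    moreover have "(z - b) - (z - a) = a - b" by simp
    ultimately show ?thesis using parallelogram[where u = "z - a" and w = "z - b"] by (simp only: dist_norm)
  qed
  ultimately show ?thesis by linarith
qed

lemma Cauchy_if_dist_sq_le:
  fixes Y :: "nat \<Rightarrow> 'a::metric_space"
  assumes e: "e \<longlonglongrightarrow> 0" and le: "\<And>m n. (dist (Y m) (Y n))\<^sup>2 \<le> e m + e n"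
  shows "Cauchy Y"
proof (rule metric_CauchyI)
  fix \<epsilon> :: real assume "\<epsilon> > 0"
  then obtain M where M: "\<And>n. n \<ge> M \<Longrightarrow> e n < \<epsilon>\<^sup>2 / 2"
    using order_tendstoD(2)[OF e, of "\<epsilon>\<^sup>2 / 2"] by (auto simp: eventually_sequentially)
  have "dist (Y m) (Y n) < \<epsilon>" if "m \<ge> M" "n \<ge> M" for m n
  proof -
    have "(dist (Y m) (Y n))\<^sup>2 < \<epsilon>\<^sup>2" using le[of m n] M[OF that(1)] M[OF that(2)] by linarith
    then show ?thesis using \<open>\<epsilon> > 0\<close> by (simp add: power2_less_imp_less)
  qed
  then show "\<exists>M. \<forall>m\<ge>M. \<forall>n\<ge>M. dist (Y m) (Y n) < \<epsilon>" by blast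
qed

lemma complete_closest_point_exists:
  fixes C :: "'a::{real_inner,complete_space} set"
  assumes "closed C" "convex C" "C \<noteq> {}"
  obtains p where "p \<in> C" "\<forall>y\<in>C. dist z p \<le> dist z y"
proof -
  define \<delta> where "\<delta> = infdist z C"
  define r where "r n = \<delta> + inverse (real (Suc n))" for n
  have "\<exists>y\<in>C. dist z y < r n" for n
    using cInf_lessD[of "dist z ` C" "r n"] assms(3)
    unfolding r_def \<delta>_def infdist_def by auto
  then obtain Y where Y: "\<And>n. Y n \<in> C" "\<And>n. dist z (Y n) < r n" by metis
  have \<delta>: "0 \<le> \<delta>" "\<forall>y\<in>C. \<delta> \<le> dist z y"
    unfolding \<delta>_def by (auto simp: infdist_nonneg infdist_le)
  have r: "r \<longlonglongrightarrow> \<delta>"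
    unfolding r_def using tendsto_add[OF tendsto_const LIMSEQ_inverse_real_of_nat] by simp
  have "Cauchy Y"
  proof (rule Cauchy_if_dist_sq_le)
    show "(\<lambda>n. 2 * (r n)\<^sup>2 - 2 * \<delta>\<^sup>2) \<longlonglongrightarrow> 0"
      using tendsto_diff[OF tendsto_mult[OF tendsto_const tendsto_power[OF r]] tendsto_const,
          of 2 2 "2 * \<delta>\<^sup>2"] by simp
    fix m n
    have "dist z (Y k) \<le> r k" for k using Y(2)[of k] by simp
    then have "(dist z (Y k))\<^sup>2 \<le> (r k)\<^sup>2" for k by (simp add: power_mono)
    from this[of m] this[of n]
    show "(dist (Y m) (Y n))\<^sup>2 \<le> (2 * (r m)\<^sup>2 - 2 * \<delta>\<^sup>2) + (2 * (r n)\<^sup>2 - 2 * \<delta>\<^sup>2)"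
      using dist_sq_le_convex_midpoint[OF assms(2) Y(1) Y(1) \<delta>, of m n] by linarith
  qed
  then obtain p where p: "Y \<longlonglongrightarrow> p" using Cauchy_convergent_iff convergent_def by blast
  have "p \<in> C" using closed_sequentially[OF assms(1)] Y(1) p by blast
  moreover have "dist z p \<le> \<delta>"
    using LIMSEQ_le[OF tendsto_dist[OF tendsto_const p] r] Y(2) less_imp_le by blast
  ultimately show thesis using that \<delta>(2) by force
qed

lemma Inter_decseq_closed_convex_nonempty:
  fixes A :: "nat \<Rightarrow> 'a::{real_inner,complete_space} set"
  assumes "decseq A" "\<And>n. closed (A n)" "\<And>n. convex (A n)" "\<And>n. A n \<noteq> {}" "bounded (A 0)"
  shows "(\<Inter>n. A n) \<noteq> {}"
proof -
  have "\<exists>p. p \<in> A n \<and> (\<forall>y\<in>A n. dist 0 p \<le> dist 0 y)" for n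
    by (metis complete_closest_point_exists[OF assms(2-4)])
  then obtain a where a: "\<And>n. a n \<in> A n" and a_min: "\<And>n y. y \<in> A n \<Longrightarrow> dist 0 (a n) \<le> dist 0 y"
    by metis
  define h where "h n = (dist 0 (a n))\<^sup>2" for n
  have a_mono: "a m \<in> A n" if "n \<le> m" for m n
    using a \<open>decseq A\<close> that by (auto simp: decseq_def)
  have "incseq h"
    unfolding incseq_def h_def using a_min a_mono by (simp add: power_mono)
  moreover obtain B where "\<forall>x\<in>A 0. norm x \<le> B" using \<open>bounded (A 0)\<close> by (auto simp: bounded_iff)
  then have "h n \<le> B\<^sup>2" for n
    unfolding h_def using a_mono[of 0 n] by (simp add: power_mono)
  ultimately obtain L where hL: "h \<longlonglongrightarrow> L" "\<And>n. h n \<le> L" by (metis incseq_convergent)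
  have dist_le: "(dist (a m) (a n))\<^sup>2 \<le> 2 * h m - 2 * h n" if "n \<le> m" for m n
  proof -
    have "(dist (a m) (a n))\<^sup>2 \<le> 2 * (dist 0 (a m))\<^sup>2 + 2 * (dist 0 (a n))\<^sup>2 - 4 * (dist 0 (a n))\<^sup>2"
      by (rule dist_sq_le_convex_midpoint[OF assms(3) a_mono[OF that] a]) (use a_min zero_le_dist in blast)+
    then show ?thesis unfolding h_def by simp
  qed
  have "Cauchy a"
  proof (rule Cauchy_if_dist_sq_le)
    show "(\<lambda>n. 2 * (L - h n)) \<longlonglongrightarrow> 0"
      using tendsto_mult[OF tendsto_const tendsto_diff[OF tendsto_const hL(1)], of 2 L] by simp
    show "(dist (a m) (a n))\<^sup>2 \<le> 2 * (L - h m) + 2 * (L - h n)" for m n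
      using dist_le[of m n] dist_le[of n m] hL(2)[of m] hL(2)[of n]
      by (cases "n \<le> m") (auto simp: dist_commute)
  qed
  then obtain \<xi> where \<xi>: "a \<longlonglongrightarrow> \<xi>" using Cauchy_convergent_iff convergent_def by blast
  have "\<xi> \<in> A n" for n
    using Lim_in_closed_set[OF assms(2) _ _ \<xi>] a_mono[of n] by (auto simp: eventually_sequentially)
  then show ?thesis by blast
qed

lemma separating_hyperplane_closed_point_complete:
  fixes z :: "'a::{real_inner,complete_space}"
  assumes "convex S" "closed S" "z \<notin> S"
  shows "\<exists>a b. inner a z < b \<and> (\<forall>x\<in>S. inner a x > b)"
proof (cases "S = {}")
  case True
  then show ?thesis by (simp add: gt_ex)
next
  case False
  then obtain y where y: "y \<in> S" and y_min: "\<forall>x\<in>S. dist z y \<le> dist z x"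
    using complete_closest_point_exists[OF assms(2,1)] by metis
  let ?a = "y - z"
  have "inner ?a y \<le> inner ?a x" if "x \<in> S" for x
    using any_closest_point_dot[OF assms(1,2) y that y_min] by (simp add: inner_diff)
  moreover have "inner ?a z < inner ?a y"
    using y assms(3) by (smt (verit) inner_diff_right inner_gt_zero_iff right_minus_eq)
  ultimately show ?thesis
    by (intro exI[of _ ?a] exI[of _ "(inner ?a z + inner ?a y) / 2"]) fastforce
qed

lemma subspace_closure:
  fixes S :: "'a::real_normed_vector set"
  assumes "subspace S"
  shows "subspace (closure S)"
proof (rule subspaceI)
  show "0 \<in> closure S" using assms subspace_0 closure_subset by blast
next
  fix x y assume "x \<in> closure S" "y \<in> closure S"
  then obtain a b where "\<forall>n. a n \<in> S" "a \<longlonglongrightarrow> x" "\<forall>n. b n \<in> S" "b \<longlonglongrightarrow> y"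
    unfolding closure_sequential by blast
  then have "\<forall>n. a n + b n \<in> S" "(\<lambda>n. a n + b n) \<longlonglongrightarrow> x + y"
    using assms subspace_add tendsto_add by blast+
  then show "x + y \<in> closure S" unfolding closure_sequential by (auto intro!: exI[of _ "\<lambda>n. a n + b n"])
next
  fix c :: real and x assume "x \<in> closure S"
  then obtain a where "\<forall>n. a n \<in> S" "a \<longlonglongrightarrow> x" unfolding closure_sequential by blast
  then have "\<forall>n. c *\<^sub>R a n \<in> S" "(\<lambda>n. c *\<^sub>R a n) \<longlonglongrightarrow> c *\<^sub>R x"
    using assms subspace_scale tendsto_scaleR[OF tendsto_const] by blast+
  then show "c *\<^sub>R x \<in> closure S" unfolding closure_sequential by (auto intro!: exI[of _ "\<lambda>n. c *\<^sub>R a n"])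
qed

lemma subspace_orth_compl: "subspace (orth_compl X)"
  unfolding subspace_def orth_compl_def by (simp add: inner_add_left)

lemma orth_proj_eqI:
  assumes "subspace X" "p \<in> X" "z - p \<in> orth_compl X"
  shows "orth_proj X z = p"
  unfolding orth_proj_def
proof (rule the_equality)
  fix q assume q: "q \<in> X \<and> z - q \<in> orth_compl X"
  have "p - q \<in> X" using assms q subspace_diff by blast
  then have "inner ((z - q) - (z - p)) (p - q) = 0"
    using assms(3) q unfolding orth_compl_def by (simp add: inner_diff_left)
  then show "q = p" by simp
qed (use assms in blast)

lemma orth_proj:
  fixes X :: "'a::{real_inner,complete_space} set"
  assumes "subspace X" "closed X"
  shows "orth_proj X z \<in> X" "z - orth_proj X z \<in> orth_compl X"
proof -
  obtain p where p: "p \<in> X" and p_min: "\<forall>y\<in>X. dist z p \<le> dist z y"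
    using complete_closest_point_exists[OF assms(2) subspace_imp_convex[OF assms(1)]]
      subspace_0[OF assms(1)] by blast
  have "inner (z - p) x = 0" if "x \<in> X" for x
  proof -
    have "p + x \<in> X" "p - x \<in> X" using assms(1) p that by (auto intro: subspace_add subspace_diff)
    then show ?thesis
      using any_closest_point_dot[OF subspace_imp_convex[OF assms(1)] assms(2) p _ p_min]
      by (smt (verit) add_diff_cancel_left' diff_diff_eq2 diff_self inner_diff_right)
  qed
  then have "z - p \<in> orth_compl X" unfolding orth_compl_def by blast
  with orth_proj_eqI[OF assms(1) p this] p show "orth_proj X z \<in> X" "z - orth_proj X z \<in> orth_compl X"
    by simp_all
qed

lemma orth_proj_id: "subspace X \<Longrightarrow> x \<in> X \<Longrightarrow> orth_proj X x = x"
  by (rule orth_proj_eqI) (auto simp: orth_compl_def)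

lemma orth_proj_add_orth_compl:
  fixes X :: "'a::{real_inner,complete_space} set"
  assumes "subspace X" "closed X" "d \<in> orth_compl X"
  shows "orth_proj X (x + d) = orth_proj X x"
proof (rule orth_proj_eqI[OF assms(1) orth_proj(1)[OF assms(1,2)]])
  have "(x - orth_proj X x) + d \<in> orth_compl X"
    using orth_proj(2)[OF assms(1,2)] assms(3) subspace_add[OF subspace_orth_compl] by blast
  then show "x + d - orth_proj X x \<in> orth_compl X" by (simp add: algebra_simps)
qed

lemma orth_compl_orth_compl_subset:
  fixes X :: "'a::{real_inner,complete_space} set"
  assumes "subspace X" "closed X"
  shows "orth_compl (orth_compl X) \<subseteq> X"
proof
  fix w assume w: "w \<in> orth_compl (orth_compl X)"
  let ?p = "orth_proj X w"
  have d: "w - ?p \<in> orth_compl X" and p: "?p \<in> X" using orth_proj[OF assms] by blast+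
  have "inner w (w - ?p) = 0" using w d unfolding orth_compl_def[of "orth_compl X"] by blast
  moreover have "inner ?p (w - ?p) = 0" using d p unfolding orth_compl_def by (simp add: inner_commute)
  ultimately have "inner (w - ?p) (w - ?p) = 0" by (simp add: inner_diff_left)
  then show "w \<in> X" using p by simp
qed

section \<open>Series and separability\<close>

lemma summable_norm_cancel_complete:
  fixes f :: "nat \<Rightarrow> 'a::{real_normed_vector,complete_space}"
  assumes "summable (\<lambda>n. norm (f n))"
  shows "summable f"
proof (rule summable_bounded_partials)
  let ?tail = "\<lambda>a. (\<Sum>n. norm (f n)) - (\<Sum>i\<le>a. norm (f i))"
  show "?tail \<longlonglongrightarrow> 0"
    using tendsto_diff[OF tendsto_const[of "\<Sum>n. norm (f n)"] summable_LIMSEQ'[OF assms]] by simp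
  have "norm (sum f {a<..b}) \<le> ?tail a" if "a < b" for a b
  proof -
    have "norm (sum f {a<..b}) \<le> (\<Sum>i\<in>{a<..b}. norm (f i))" by (rule norm_sum)
    also have "\<dots> = (\<Sum>i\<le>b. norm (f i)) - (\<Sum>i\<le>a. norm (f i))"
      using that by (subst sum_diff[symmetric]) (auto intro: sum.cong)
    also have "(\<Sum>i\<le>b. norm (f i)) \<le> (\<Sum>n. norm (f n))"
      by (rule sum_le_suminf[OF assms]) auto
    finally show ?thesis by simp
  qed
  then show "\<forall>\<^sub>F x0 in sequentially. \<forall>a\<ge>x0. \<forall>b>a. norm (sum f {a<..b}) \<le> ?tail a"
    by simp
qed

lemma separable_countable_dense_subset:
  fixes S :: "'a::metric_space set"
  assumes "separable_space (euclidean :: 'a topology)"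
  obtains T where "countable T" "T \<subseteq> S" "S \<subseteq> closure T"
proof -
  obtain C :: "'a set" where C: "countable C" "closure C = UNIV"
    using assms unfolding separable_space_def by auto
  define I where "I = {(c, n). c \<in> C \<and> (\<exists>s\<in>S. dist c s < inverse (real (Suc n)))}"
  define pick where "pick = (\<lambda>(c, n). SOME s. s \<in> S \<and> dist c s < inverse (real (Suc n)))"
  have pick: "pick (c, n) \<in> S" "dist c (pick (c, n)) < inverse (real (Suc n))" if "(c, n) \<in> I" for c n
    using someI_ex[of "\<lambda>s. s \<in> S \<and> dist c s < inverse (real (Suc n))"] that
    unfolding I_def pick_def by auto
  have "countable I"
    by (rule countable_subset[of _ "C \<times> UNIV"]) (auto simp: I_def C(1))
  moreover have "s \<in> closure (pick ` I)" if "s \<in> S" for s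
    unfolding closure_approachable
  proof (intro allI impI)
    fix e :: real assume "e > 0"
    then obtain n where n: "inverse (real (Suc n)) < e / 2"
      using reals_Archimedean[of "e/2"] by auto
    have "\<exists>c\<in>C. dist c s < inverse (real (Suc n))"
      using C(2) closure_approachable[of s C] by auto
    then obtain c where c: "c \<in> C" "dist c s < inverse (real (Suc n))" by blast
    then have cn: "(c, n) \<in> I" unfolding I_def using that by auto
    moreover have "dist (pick (c, n)) s < e"
      using dist_triangle[of "pick (c, n)" s c] pick[OF cn] c n by (simp add: dist_commute)
    ultimately show "\<exists>t\<in>pick ` I. dist t s < e" by blast
  qed
  moreover have "pick ` I \<subseteq> S" using pick by auto
  ultimately show thesis using that[of "pick ` I"] by blast
qed

lemma exists_positive_weights_summable:
  fixes x :: "nat \<Rightarrow> 'a::{real_normed_vector,complete_space}"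
  obtains \<beta> where "\<And>n. \<beta> n > 0" "summable \<beta>" "summable (\<lambda>n. \<beta> n *\<^sub>R x n)"
proof
  let ?\<beta> = "\<lambda>n. (1/2::real) ^ n / (1 + norm (x n))"
  have geom: "summable (\<lambda>n. (1/2::real) ^ n)" by (rule summable_geometric) simp
  show pos: "?\<beta> n > 0" for n by (simp add: add_pos_nonneg)
  have "?\<beta> n \<le> (1/2) ^ n / 1" for n by (rule divide_left_mono) (auto simp: add_pos_nonneg)
  then show "summable ?\<beta>"
    using pos by (intro summable_comparison_test[OF _ geom]) (simp add: less_imp_le)
  have "norm (?\<beta> n *\<^sub>R x n) \<le> (1/2) ^ n" for n
  proof -
    have "norm (?\<beta> n *\<^sub>R x n) = (1/2) ^ n * (norm (x n) / (1 + norm (x n)))"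
      using pos[of n] by (simp only: norm_scaleR abs_of_pos times_divide_eq_left times_divide_eq_right)
    also have "\<dots> \<le> (1/2) ^ n" by (rule mult_left_le) (simp_all add: add_pos_nonneg)
    finally show ?thesis .
  qed
  then show "summable (\<lambda>n. ?\<beta> n *\<^sub>R x n)"
    by (intro summable_norm_cancel_complete[OF summable_comparison_test[OF _ geom]]) simp
qed

text \<open>The witness is a strictly positive weighted average of a dense sequence in S; positivity of
  the weights turns each inequality of the hypothesis into an equality.\<close>

lemma exists_average_not_properly_separated:
  fixes S :: "'a::{real_inner,complete_space} set"
  assumes "separable_space (euclidean :: 'a topology)" "S \<noteq> {}"
  obtains c where "\<And>d. \<forall>\<xi>\<in>S. inner \<xi> d \<le> inner c d \<Longrightarrow> \<forall>\<xi>\<in>S. inner \<xi> d = inner c d"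
proof -
  obtain T where T: "countable T" "T \<subseteq> S" "S \<subseteq> closure T"
    using separable_countable_dense_subset[OF assms(1)] by metis
  define x where "x = from_nat_into T"
  have "T \<noteq> {}" using T(3) assms(2) by auto
  then have x: "range x = T" unfolding x_def using T(1) by (rule range_from_nat_into)
  obtain \<beta> where \<beta>: "\<And>n. \<beta> n > 0" "summable \<beta>" "summable (\<lambda>n. \<beta> n *\<^sub>R x n)"
    using exists_positive_weights_summable by metis
  define K where "K = suminf \<beta>"
  define \<sigma> where "\<sigma> = (\<Sum>n. \<beta> n *\<^sub>R x n)"
  have "K > 0" unfolding K_def using suminf_pos[OF \<beta>(2,1)] .
  show thesis
  proof
    fix d assume le: "\<forall>\<xi>\<in>S. inner \<xi> d \<le> inner ((1 / K) *\<^sub>R \<sigma>) d"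
    define m where "m = inner ((1 / K) *\<^sub>R \<sigma>) d"
    have "(\<lambda>n. \<beta> n * m - inner (\<beta> n *\<^sub>R x n) d) sums (K * m - inner \<sigma> d)"
      unfolding K_def \<sigma>_def
      by (intro sums_diff sums_mult2 summable_sums \<beta>
          bounded_linear.sums[OF bounded_linear_inner_left])
    moreover have "K * m = inner \<sigma> d" unfolding m_def using \<open>K > 0\<close> by simp
    ultimately have sums0: "(\<lambda>n. \<beta> n * (m - inner (x n) d)) sums 0"
      by (simp add: algebra_simps)
    have "0 \<le> \<beta> n * (m - inner (x n) d)" for n
    proof -
      have "inner (x n) d \<le> m" using le T(2) x unfolding m_def by auto
      then show ?thesis using \<beta>(1)[of n] by simp
    qed
    then have "\<beta> n * (m - inner (x n) d) = 0" for n
      using suminf_eq_zero_iff[OF sums_summable[OF sums0]] sums_unique[OF sums0] by simp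
    then have "inner (x n) d = m" for n by (metis \<beta>(1) less_numeral_extra(3) mult_eq_0_iff right_minus_eq)
    then have "T \<subseteq> {\<xi>. inner \<xi> d = m}" using x by auto
    then have "closure T \<subseteq> {\<xi>. inner \<xi> d = m}"
      by (rule closure_minimal) (intro closed_Collect_eq continuous_intros)
    then show "\<forall>\<xi>\<in>S. inner \<xi> d = inner ((1 / K) *\<^sub>R \<sigma>) d" using T(3) unfolding m_def by blast
  qed
qed

section \<open>Subgradients of continuous convex functions\<close>

lemma approx_subgradient_exists:
  fixes f :: "'a::{real_inner,complete_space} \<Rightarrow> real"
  assumes "continuous_on UNIV f" "convex_on UNIV f" "\<epsilon> > 0"
  obtains c where "\<And>x. f z - \<epsilon> + inner c (x - z) \<le> f x"
proof -
  have "closed (epigraph UNIV f)"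
    unfolding epigraph_def
    by (auto intro!: closed_Collect_le continuous_on_compose2[OF assms(1)] continuous_intros)
  moreover have "(z, f z - \<epsilon>) \<notin> epigraph UNIV f" using assms(3) by (simp add: epigraph_def)
  ultimately obtain a b \<beta> where sep: "inner a z + b * (f z - \<epsilon>) < \<beta>"
    and "\<forall>(x, s)\<in>epigraph UNIV f. inner a x + b * s > \<beta>"
    using separating_hyperplane_closed_point_complete[OF convex_epigraphI[OF assms(2)]]
    by (force simp: inner_Pair)
  then have epi: "inner a x + b * s > \<beta>" if "f x \<le> s" for x s
    using that by (auto simp: epigraph_def)
  have "b > 0"
    using sep epi[of z "f z"] assms(3) by (smt (verit) mult_le_cancel_left right_diff_distrib)
  show thesis
  proof
    fix x
    have "inner a (z - x) < b * (f x - (f z - \<epsilon>))"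
      using sep epi[of x "f x"] by (simp add: inner_diff_right algebra_simps)
    then have "inner ((1 / b) *\<^sub>R a) (z - x) < f x - (f z - \<epsilon>)"
      using \<open>b > 0\<close> by (simp add: field_simps)
    then show "f z - \<epsilon> + inner (- (1 / b) *\<^sub>R a) (x - z) \<le> f x"
      by (simp add: inner_diff_right)
  qed
qed

lemma bounded_approx_subgradients:
  fixes f :: "'a::real_inner \<Rightarrow> real"
  assumes "continuous (at z) f"
  shows "bounded {c. \<forall>x. f z - \<epsilon> + inner c (x - z) \<le> f x}"
proof -
  obtain r where r: "r > 0" and near: "\<And>x. dist x z < r \<Longrightarrow> dist (f x) (f z) < 1"
    using assms zero_less_one unfolding continuous_at_eps_delta by blast
  have "norm c \<le> 2 * (1 + \<bar>\<epsilon>\<bar>) / r" if c: "\<forall>x. f z - \<epsilon> + inner c (x - z) \<le> f x" for c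
  proof (cases "c = 0")
    case False
    define x where "x = z + (r / 2 / norm c) *\<^sub>R c"
    have "dist x z < r" unfolding x_def dist_norm using False r by simp
    moreover have "inner c (x - z) = r / 2 * norm c"
      unfolding x_def using False by (simp add: power2_norm_eq_inner[symmetric] power2_eq_square)
    ultimately have "r / 2 * norm c < 1 + \<bar>\<epsilon>\<bar>"
      using c[rule_format, of x] near[of x] abs_ge_self[of \<epsilon>] by (simp add: dist_real_def abs_less_iff)
    then show ?thesis using r by (simp add: field_simps)
  qed (use r in simp)
  then show ?thesis unfolding bounded_iff by blast
qed

lemma subdiff_nonempty:
  fixes f :: "'a::{real_inner,complete_space} \<Rightarrow> real"
  assumes "continuous_on UNIV f" "convex_on UNIV f"
  shows "subdiff f z \<noteq> {}"
proof -
  define A where "A n = {c. \<forall>x. f z - inverse (real (Suc n)) + inner c (x - z) \<le> f x}" for n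
  have A_Inter: "A n = (\<Inter>x. {c. inner (x - z) c \<le> f x - f z + inverse (real (Suc n))})" for n
    unfolding A_def by (rule set_eqI) (simp add: inner_commute field_simps)
  have "(\<Inter>n. A n) \<noteq> {}"
  proof (rule Inter_decseq_closed_convex_nonempty)
    show "decseq A"
      unfolding decseq_def A_def by (auto intro: order_trans[rotated] simp: le_imp_inverse_le)
    show "closed (A n)" "convex (A n)" for n
      unfolding A_Inter by (auto intro!: closed_INT convex_INT closed_halfspace_le convex_halfspace_le)
    show "A n \<noteq> {}" for n
      using approx_subgradient_exists[OF assms, of "inverse (real (Suc n))" z] unfolding A_def by auto
    show "bounded (A 0)"
      unfolding A_def using assms(1)
      by (intro bounded_approx_subgradients) (simp add: continuous_on_eq_continuous_at)
  qed
  then obtain \<xi> where \<xi>: "\<And>n. \<xi> \<in> A n" by blast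
  have "f z + inner \<xi> (y - z) \<le> f y" for y
  proof (rule field_le_epsilon)
    fix e :: real assume "e > 0"
    then obtain n where "inverse (real (Suc n)) < e" using reals_Archimedean by blast
    moreover have "f z - inverse (real (Suc n)) + inner \<xi> (y - z) \<le> f y"
      using \<xi>[of n] unfolding A_def by blast
    ultimately show "f z + inner \<xi> (y - z) \<le> f y + e" by linarith
  qed
  then show ?thesis unfolding subdiff_def by blast
qed

lemma dir_coercive_of_subgradient:
  fixes f :: "'a::real_inner \<Rightarrow> real"
  assumes "convex_on UNIV f" "\<xi> \<in> subdiff f y" "inner c d < inner \<xi> d"
  shows "filterlim (\<lambda>t. f (x + t *\<^sub>R d) - inner c (x + t *\<^sub>R d)) at_top at_top"
proof -
  define g where "g z = f z - inner c z" for z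
  define a where "a = inner \<xi> d - inner c d"
  have "a > 0" unfolding a_def using assms(3) by simp
  have slope: "g y + s * a \<le> g (y + s *\<^sub>R d)" for s
    using assms(2) unfolding subdiff_def g_def a_def
    by (auto simp: inner_add_right algebra_simps elim!: allE[of _ "y + s *\<^sub>R d"])
  \<comment> \<open>convexity transfers the linear growth of g along the line through y to the parallel line through x\<close>
  have mid: "g (y + (t/2) *\<^sub>R d) \<le> g (2 *\<^sub>R y - x) / 2 + g (x + t *\<^sub>R d) / 2" for t
  proof -
    have "(1 - 1/2) *\<^sub>R (2 *\<^sub>R y - x) + (1/2) *\<^sub>R (x + t *\<^sub>R d) = y + (t/2) *\<^sub>R d"
      by (simp add: algebra_simps)
    then have "f (y + (t/2) *\<^sub>R d) \<le> f (2 *\<^sub>R y - x) / 2 + f (x + t *\<^sub>R d) / 2"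
      using convex_onD[OF assms(1), of "1/2" "2 *\<^sub>R y - x" "x + t *\<^sub>R d"] by simp
    then show ?thesis unfolding g_def by (simp add: inner_add_right inner_diff_right field_simps)
  qed
  have lim: "filterlim (\<lambda>t. (2 * g y - g (2 *\<^sub>R y - x)) + a * t) at_top at_top"
    using \<open>a > 0\<close>
    by (intro filterlim_tendsto_add_at_top[OF tendsto_const]
        filterlim_tendsto_pos_mult_at_top[OF tendsto_const] filterlim_ident)
  have "(2 * g y - g (2 *\<^sub>R y - x)) + a * t \<le> g (x + t *\<^sub>R d)" for t
    using mid[of t] slope[of "t/2"] by (simp add: field_simps)
  then have "filterlim (\<lambda>t. g (x + t *\<^sub>R d)) at_top at_top"
    by (intro filterlim_at_top_mono[OF lim always_eventually] allI)
  then show ?thesis unfolding g_def .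
qed

lemma not_dir_coercive_on_affine_line:
  assumes "dir_coercive_on X g" "x \<in> X" "d \<in> X" "- d \<in> X" "d \<noteq> 0"
    and "\<And>t. g (x + t *\<^sub>R d) = a + t * b"
  shows False
proof -
  have "filterlim (\<lambda>t. g (x + t *\<^sub>R d)) at_top at_top"
    "filterlim (\<lambda>t. g (x + t *\<^sub>R (- d))) at_top at_top"
  proof -
    have "\<forall>v\<in>X. v \<noteq> 0 \<longrightarrow> filterlim (\<lambda>t. g (x + t *\<^sub>R v)) at_top at_top"
      using assms(1,2) unfolding dir_coercive_on_def by blast
    then show "filterlim (\<lambda>t. g (x + t *\<^sub>R d)) at_top at_top"
      "filterlim (\<lambda>t. g (x + t *\<^sub>R (- d))) at_top at_top"
      using assms(3-5) neg_equal_0_iff_equal by blast+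
  qed
  moreover have "g (x + t *\<^sub>R (- d)) = a - t * b" for t using assms(6)[of "- t"] by simp
  ultimately have "filterlim (\<lambda>t. a + t * b) at_top at_top" "filterlim (\<lambda>t. a - t * b) at_top at_top"
    by (simp_all add: assms(6))
  then have "\<forall>\<^sub>F t in at_top. a + 1 \<le> a + t * b" "\<forall>\<^sub>F t in at_top. a + 1 \<le> a - t * b"
    unfolding filterlim_at_top by blast+
  then have "\<forall>\<^sub>F t :: real in at_top. False" by eventually_elim simp
  then show False by simp
qed

section \<open>The subgradient space\<close>

definition subgrad_space :: "('a::real_inner \<Rightarrow> real) \<Rightarrow> 'a set" where
  "subgrad_space f = closure (span {u - w | u w. \<exists>z y. u \<in> subdiff f z \<and> w \<in> subdiff f y})"

lemma subgrad_space_closed_subspace: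
  fixes f :: "'a::real_inner \<Rightarrow> real"
  shows "subspace (subgrad_space f)" "closed (subgrad_space f)"
  unfolding subgrad_space_def by (simp_all add: subspace_closure)

lemma subgrad_diff_in_subgrad_space:
  "u \<in> subdiff f z \<Longrightarrow> w \<in> subdiff f y \<Longrightarrow> u - w \<in> subgrad_space f"
  unfolding subgrad_space_def by (rule subsetD[OF closure_subset], rule span_base) blast

lemma subgrad_space_minimal:
  assumes "subspace X" "closed X" "\<And>u w z y. u \<in> subdiff f z \<Longrightarrow> w \<in> subdiff f y \<Longrightarrow> u - w \<in> X"
  shows "subgrad_space f \<subseteq> X"
  unfolding subgrad_space_def using assms
  by (intro closure_minimal span_minimal) blast+

lemma affine_along_orth_subgrad_space:
  assumes "\<And>x. subdiff f x \<noteq> {}" "d \<in> orth_compl (subgrad_space f)" "\<xi>0 \<in> subdiff f z0"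
  shows "f (z + t *\<^sub>R d) = f z + t * inner \<xi>0 d"
proof -
  have slope: "inner \<xi> d = inner \<xi>0 d" if "\<xi> \<in> subdiff f y" for \<xi> y
    using assms(2) subgrad_diff_in_subgrad_space[OF that assms(3)]
    unfolding orth_compl_def by (fastforce simp: inner_diff_right inner_commute)
  obtain \<xi> \<eta> where \<xi>: "\<xi> \<in> subdiff f z" and \<eta>: "\<eta> \<in> subdiff f (z + t *\<^sub>R d)"
    using assms(1) by blast
  have "f (z + t *\<^sub>R d) \<ge> f z + inner \<xi> ((z + t *\<^sub>R d) - z)"
    "f z \<ge> f (z + t *\<^sub>R d) + inner \<eta> (z - (z + t *\<^sub>R d))"
    using \<xi> \<eta> unfolding subdiff_def by blast+
  then show ?thesis using slope[OF \<xi>] slope[OF \<eta>] by (simp add: inner_diff_right)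
qed

lemma subgrad_space_decomposition:
  fixes f :: "'a::{real_inner,complete_space} \<Rightarrow> real"
  assumes "\<And>x. subdiff f x \<noteq> {}" "\<xi>0 \<in> subdiff f z0"
  shows "f z = f (orth_proj (subgrad_space f) z) + inner (\<xi>0 - orth_proj (subgrad_space f) \<xi>0) z"
proof -
  let ?X = "subgrad_space f" and ?P = "orth_proj (subgrad_space f)"
  note P = orth_proj[OF subgrad_space_closed_subspace[of f]]
  have "f z = f (?P z + 1 *\<^sub>R (z - ?P z))" by simp
  also have "\<dots> = f (?P z) + inner \<xi>0 (z - ?P z)"
    using affine_along_orth_subgrad_space[OF assms(1) P(2)[of z] assms(2), of "?P z" 1] by simp
  also have "inner \<xi>0 (z - ?P z) = inner (\<xi>0 - ?P \<xi>0) z"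
  proof -
    have "inner (\<xi>0 - ?P \<xi>0) (?P z) = 0" "inner (z - ?P z) (?P \<xi>0) = 0"
      using P unfolding orth_compl_def by blast+
    then show ?thesis by (simp add: inner_diff_left inner_diff_right inner_commute)
  qed
  finally show ?thesis .
qed

lemma dir_coercive_on_subgrad_space:
  fixes f :: "'a::{real_inner,complete_space} \<Rightarrow> real"
  assumes "separable_space (euclidean :: 'a topology)" "convex_on UNIV f" "\<And>x. subdiff f x \<noteq> {}"
  obtains c where "dir_coercive_on (subgrad_space f) (\<lambda>x. f x - inner c x)"
proof -
  let ?S = "\<Union>z. subdiff f z"
  have "?S \<noteq> {}" using assms(3) by blast
  then obtain c where c: "\<And>d. \<forall>\<xi>\<in>?S. inner \<xi> d \<le> inner c d \<Longrightarrow> \<forall>\<xi>\<in>?S. inner \<xi> d = inner c d"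
    by (rule exists_average_not_properly_separated[OF assms(1)]) blast
  have "\<exists>\<xi>\<in>?S. inner c d < inner \<xi> d" if "d \<in> subgrad_space f" "d \<noteq> 0" for d
  proof (rule ccontr)
    assume "\<not> ?thesis"
    then have eq: "\<forall>\<xi>\<in>?S. inner \<xi> d = inner c d" by (intro c) (auto simp: not_less)
    have "subgrad_space f \<subseteq> {y. inner d y = 0}"
    proof (rule subgrad_space_minimal)
      show "subspace {y. inner d y = 0}" "closed {y. inner d y = 0}"
        by (simp_all add: subspace_hyperplane closed_hyperplane)
      show "u - w \<in> {y. inner d y = 0}" if "u \<in> subdiff f z" "w \<in> subdiff f y" for u w z y
      proof -
        have "inner u d = inner c d" "inner w d = inner c d" using eq that by blast+
        then show ?thesis by (simp add: inner_diff_right inner_commute)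
      qed
    qed
    then show False using that by auto
  qed
  then have "dir_coercive_on (subgrad_space f) (\<lambda>x. f x - inner c x)"
    unfolding dir_coercive_on_def by (blast intro: dir_coercive_of_subgradient[OF assms(2)])
  then show thesis ..
qed

section \<open>Uniqueness of the decomposition\<close>

lemma is_decomp_affine_along_orth_compl:
  fixes f :: "'a::{real_inner,complete_space} \<Rightarrow> real"
  assumes "is_decomp f X v c" "d \<in> orth_compl X"
  shows "f (z + t *\<^sub>R d) = f z + t * inner v d"
proof -
  have X: "subspace X" "closed X" and eq: "\<And>z. f z = c (orth_proj X z) + inner v z"
    using assms(1) unfolding is_decomp_def by auto
  have "t *\<^sub>R d \<in> orth_compl X" using assms(2) subspace_scale[OF subspace_orth_compl] by blast
  then show ?thesis
    using eq[of "z + t *\<^sub>R d"] eq[of z] orth_proj_add_orth_compl[OF X] by (simp add: inner_add_right)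
qed

lemma is_decomp_subgradient_shift:
  fixes f :: "'a::{real_inner,complete_space} \<Rightarrow> real"
  assumes "is_decomp f X v c" "\<xi> \<in> subdiff f z"
  shows "\<xi> - v \<in> X"
proof (rule subsetD[OF orth_compl_orth_compl_subset])
  show "subspace X" "closed X" using assms(1) unfolding is_decomp_def by auto
  have "inner (\<xi> - v) d = 0" if d: "d \<in> orth_compl X" for d
  proof -
    have "f (z + t *\<^sub>R d) \<ge> f z + inner \<xi> ((z + t *\<^sub>R d) - z)" for t
      using assms(2) unfolding subdiff_def by blast
    then have "t * inner \<xi> d \<le> t * inner v d" for t
      using is_decomp_affine_along_orth_compl[OF assms(1) d] by simp
    from this[of 1] this[of "-1"] show ?thesis by (simp add: inner_diff_left)
  qed
  then show "\<xi> - v \<in> orth_compl (orth_compl X)" unfolding orth_compl_def by blast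
qed

lemma is_decomp_vector:
  fixes f :: "'a::{real_inner,complete_space} \<Rightarrow> real"
  assumes "is_decomp f X v c" "\<xi> \<in> subdiff f z"
  shows "v = \<xi> - orth_proj X \<xi>"
proof -
  have "orth_proj X \<xi> = \<xi> - v"
    using assms(1) is_decomp_subgradient_shift[OF assms]
    unfolding is_decomp_def by (intro orth_proj_eqI) simp_all
  then show ?thesis by simp
qed

lemma is_decomp_on_subspace:
  assumes "is_decomp f X v c" "x \<in> X"
  shows "c x = f x"
  using assms orth_proj_id[of X x] unfolding is_decomp_def orth_compl_def by auto

lemma subgrad_space_subset_is_decomp:
  fixes f :: "'a::{real_inner,complete_space} \<Rightarrow> real"
  assumes "is_decomp f X v c"
  shows "subgrad_space f \<subseteq> X"
proof (rule subgrad_space_minimal)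
  show X: "subspace X" "closed X" using assms unfolding is_decomp_def by auto
  show "u - w \<in> X" if "u \<in> subdiff f z" "w \<in> subdiff f y" for u w z y
    using subspace_diff[OF X(1) is_decomp_subgradient_shift[OF assms that(1)]
        is_decomp_subgradient_shift[OF assms that(2)]] by simp
qed

lemma is_decomp_subset_subgrad_space:
  fixes f :: "'a::{real_inner,complete_space} \<Rightarrow> real"
  assumes "\<And>x. subdiff f x \<noteq> {}" "is_decomp f X v c"
  shows "X \<subseteq> subgrad_space f"
proof
  fix x assume "x \<in> X"
  let ?P = "orth_proj (subgrad_space f)"
  define d where "d = x - ?P x"
  note P = orth_proj[OF subgrad_space_closed_subspace[of f]]
  have X: "subspace X" and ess: "ess_dir_coercive_on X c"
    using assms(2) unfolding is_decomp_def by auto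
  have "d \<in> X"
    unfolding d_def using \<open>x \<in> X\<close> P(1) subgrad_space_subset_is_decomp[OF assms(2)] subspace_diff[OF X] by blast
  obtain \<xi>0 where \<xi>0: "\<xi>0 \<in> subdiff f 0" using assms(1) by blast
  obtain l where l: "linear_on_subspace X l" "dir_coercive_on X (\<lambda>x. c x - l x)"
    using ess unfolding ess_dir_coercive_on_def by blast
  \<comment> \<open>c is affine along d, which essential coercivity only allows for d = 0\<close>
  have "(\<lambda>x. c x - l x) (0 + t *\<^sub>R d) = f 0 + t * (inner \<xi>0 d - l d)" for t
  proof -
    have "t *\<^sub>R d \<in> X" using \<open>d \<in> X\<close> subspace_scale[OF X] by blast
    then have "c (t *\<^sub>R d) = f (0 + t *\<^sub>R d)" using is_decomp_on_subspace[OF assms(2)] by simp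
    also have "\<dots> = f 0 + t * inner \<xi>0 d"
      using affine_along_orth_subgrad_space[OF assms(1) P(2)[of x] \<xi>0] unfolding d_def .
    finally show ?thesis using l(1) \<open>d \<in> X\<close> unfolding linear_on_subspace_def by (simp add: algebra_simps)
  qed
  then have "d = 0"
    using not_dir_coercive_on_affine_line[OF l(2) subspace_0[OF X] \<open>d \<in> X\<close> subspace_neg[OF X \<open>d \<in> X\<close>]]
    by blast
  then show "x \<in> subgrad_space f" using P(1)[of x] unfolding d_def by simp
qed

theorem mainTheorem1:
  fixes f :: "'a::{real_inner, complete_space} \<Rightarrow> real"
  assumes "separable_space (euclidean :: 'a topology)"
    and "continuous_on UNIV f"
    and "convex_on UNIV f"
  shows "\<exists>X v c. is_decomp f X v c \<and>
           (\<forall>X' v' c'. is_decomp f X' v' c' \<longrightarrow> X' = X \<and> v' = v \<and> (\<forall>x\<in>X. c' x = c x)) \<and>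
           X = closure (span {u - w | u w. \<exists>z y. u \<in> subdiff f z \<and> w \<in> subdiff f y}) \<and>
           (\<forall>z0 \<xi>0. \<xi>0 \<in> subdiff f z0 \<longrightarrow> v = \<xi>0 - orth_proj X \<xi>0)"
proof -
  have ne: "\<And>x. subdiff f x \<noteq> {}" using subdiff_nonempty[OF assms(2,3)] .
  then obtain \<xi>0 where \<xi>0: "\<xi>0 \<in> subdiff f 0" by blast
  define X where "X = subgrad_space f"
  define v where "v = \<xi>0 - orth_proj X \<xi>0"
  note X = subgrad_space_closed_subspace[of f, folded X_def]
  obtain l where "dir_coercive_on X (\<lambda>x. f x - inner l x)"
    using dir_coercive_on_subgrad_space[OF assms(1,3) ne] unfolding X_def by blast
  then have "ess_dir_coercive_on X f"
    unfolding ess_dir_coercive_on_def linear_on_subspace_def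
    by (intro exI[of _ "inner l"]) (auto simp: inner_add_right intro: continuous_intros)
  then have dec: "is_decomp f X v f"
    unfolding is_decomp_def v_def
    using X orth_proj[OF X] convex_on_subset[OF assms(3) subset_UNIV subspace_imp_convex[OF X(1)]]
      subgrad_space_decomposition[OF ne \<xi>0] unfolding X_def by blast
  have "X' = X \<and> v' = v \<and> (\<forall>x\<in>X. c' x = f x)" if "is_decomp f X' v' c'" for X' v' c'
    using subgrad_space_subset_is_decomp[OF that] is_decomp_subset_subgrad_space[OF ne that]
      is_decomp_vector[OF that \<xi>0] is_decomp_on_subspace[OF that]
    unfolding X_def v_def by auto
  with dec is_decomp_vector[OF dec] show ?thesis unfolding X_def subgrad_space_def by blast
qed

end
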